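(* Let $K$ be a field, $S=K[t_1,\ldots,t_s]$, and let $\mathbb{X}$ be a finite subset of the projective space $\mathbb{P}^{s-1}$ over $K$ with $|\mathbb{X}|\geq 2$. Then $\delta_{\mathbb{X}}(d)=\delta_{I(\mathbb{X})}(d)\geq 1$ for all $d\geq 1$.
   Context: $S$ has the standard grading, $S_d$ is its degree $d$ part. $I(\mathbb{X})$ is the vanishing ideal of $\mathbb{X}$: the ideal generated by all homogeneous polynomials vanishing at all points of $\mathbb{X}$. For homogeneous $f$, $V_{\mathbb{X}}(f)$ is the set of points of $\mathbb{X}$ at which $f$ vanishes. $\delta_{\mathbb{X}}(d)$ is the minimum distance of the projective Reed–Muller-type code $C_{\mathbb{X}}(d)$, i.e. $\delta_{\mathbb{X}}(d)=\min\{|\mathbb{X}|-|V_{\mathbb{X}}(f)|: f\in S_d,\ f\notin I(\mathbb{X})\}$ (the minimum number of points of $\mathbb{X}$ at which a degree-$d$ form not vanishing on all of $\mathbb{X}$ is nonzero). For a nonzero graded ideal $I$ with Hilbert function $H_I(d)=\dim_K(S_d/I_d)$ and $k=\dim(S/I)$, $\deg(S/I)=(k-1)!\lim_{d\to\infty}H_I(d)/d^{k-1}$ if $k\geq1$ and $\dim_K(S/I)$ if $k=0$. With $\mathcal{F}_d=\{f\in S_d: f\notin I,\ (I\colon f)\neq I\}$, the minimum distance function is $\delta_I(d)=\deg(S/I)-\max\{\deg(S/(I,f)): f\in\mathcal{F}_d\}$ if $\mathcal{F}_d\neq\emptyset$ and $\delta_I(d)=\deg(S/I)$ otherwise. *)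

theory Defs
  imports "HOL-Analysis.Analysis" "HOL-Library.Poly_Mapping"
begin

text \<open>Polynomial ring S = K[t_i : i in 'n] over a field K = 'a, with 'n a finite type of
  s = CARD('n) variables; a polynomial is a finitely supported map from monomials
  (exponent vectors 'n =>0 nat) to coefficients.\<close>

type_synonym ('n, 'a) mpoly = "('n \<Rightarrow>\<^sub>0 nat) \<Rightarrow>\<^sub>0 'a"

definition mon_deg :: "('n::finite \<Rightarrow>\<^sub>0 nat) \<Rightarrow> nat" where
  "mon_deg m = (\<Sum>i\<in>UNIV. Poly_Mapping.lookup m i)"

definition homogeneous :: "nat \<Rightarrow> ('n::finite, 'a::zero) mpoly \<Rightarrow> bool" where
  "homogeneous d f \<longleftrightarrow> (\<forall>m\<in>Poly_Mapping.keys f. mon_deg m = d)"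

definition S_deg :: "nat \<Rightarrow> ('n::finite, 'a::zero) mpoly set" where
  "S_deg d = {f. homogeneous d f}"

definition hcomp :: "nat \<Rightarrow> ('n::finite, 'a::zero) mpoly \<Rightarrow> ('n, 'a) mpoly" where
  "hcomp d f = Abs_poly_mapping (\<lambda>m. if mon_deg m = d then Poly_Mapping.lookup f m else 0)"

definition pscale :: "'a::field \<Rightarrow> ('n, 'a) mpoly \<Rightarrow> ('n, 'a) mpoly" where
  "pscale c p = Poly_Mapping.single 0 c * p"

definition kdim :: "('n, 'a::field) mpoly set \<Rightarrow> nat" where
  "kdim V = vector_space.dim pscale V"

definition peval :: "('n::finite, 'a::field) mpoly \<Rightarrow> ('n \<Rightarrow> 'a) \<Rightarrow> 'a" where
  "peval f x = (\<Sum>m\<in>Poly_Mapping.keys f. Poly_Mapping.lookup f m * (\<Prod>i\<in>UNIV. x i ^ Poly_Mapping.lookup m i))"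

definition is_ideal :: "'r::comm_ring_1 set \<Rightarrow> bool" where
  "is_ideal I \<longleftrightarrow> 0 \<in> I \<and> (\<forall>a\<in>I. \<forall>b\<in>I. a + b \<in> I) \<and> (\<forall>a\<in>I. \<forall>r. r * a \<in> I)"

definition ideal_gen :: "'r::comm_ring_1 set \<Rightarrow> 'r set" where
  "ideal_gen A = \<Inter>{J. is_ideal J \<and> A \<subseteq> J}"

definition prime_ideal :: "'r::comm_ring_1 set \<Rightarrow> bool" where
  "prime_ideal P \<longleftrightarrow> is_ideal P \<and> P \<noteq> UNIV \<and> (\<forall>a b. a * b \<in> P \<longrightarrow> a \<in> P \<or> b \<in> P)"

definition graded_ideal :: "('n::finite, 'a::field) mpoly set \<Rightarrow> bool" where
  "graded_ideal I \<longleftrightarrow> is_ideal I \<and> (\<forall>f\<in>I. \<forall>d. hcomp d f \<in> I)"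

definition colon :: "'r::comm_ring_1 set \<Rightarrow> 'r \<Rightarrow> 'r set" where
  "colon I f = {g. g * f \<in> I}"

definition hilbert_fun :: "('n::finite, 'a::field) mpoly set \<Rightarrow> nat \<Rightarrow> nat" where
  "hilbert_fun I d = kdim (S_deg d :: ('n, 'a) mpoly set) - kdim (I \<inter> S_deg d)"

text \<open>Krull dimension of S/I: supremum of lengths k of chains P_0 < ... < P_k of
  prime ideals of S containing I.\<close>
definition krull_dim :: "('n::finite, 'a::field) mpoly set \<Rightarrow> nat" where
  "krull_dim I = Sup {k. \<exists>P :: nat \<Rightarrow> ('n, 'a) mpoly set.
      (\<forall>i\<le>k. prime_ideal (P i) \<and> I \<subseteq> P i) \<and> (\<forall>i<k. P i \<subset> P (Suc i))}"

text \<open>Degree (multiplicity) of S/I.  For k = 0, dim_K(S/I) = sum of H_I(d) over all d.\<close>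
definition deg_quot :: "('n::finite, 'a::field) mpoly set \<Rightarrow> real" where
  "deg_quot I = (let k = krull_dim I in
     if k \<ge> 1 then fact (k - 1) * lim (\<lambda>d. real (hilbert_fun I d) / real d ^ (k - 1))
     else suminf (\<lambda>d. real (hilbert_fun I d)))"

definition F_set :: "('n::finite, 'a::field) mpoly set \<Rightarrow> nat \<Rightarrow> ('n, 'a) mpoly set" where
  "F_set I d = {f \<in> S_deg d. f \<notin> I \<and> colon I f \<noteq> I}"

definition delta_I :: "('n::finite, 'a::field) mpoly set \<Rightarrow> nat \<Rightarrow> real" where
  "delta_I I d = (if F_set I d \<noteq> {}
     then deg_quot I - Max ((\<lambda>f. deg_quot (ideal_gen (insert f I))) ` F_set I d)
     else deg_quot I)"

definition proj_point :: "('n \<Rightarrow> 'a::field) \<Rightarrow> ('n \<Rightarrow> 'a) set" where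
  "proj_point x = {y. \<exists>c. c \<noteq> 0 \<and> y = (\<lambda>i. c * x i)}"

definition proj_space :: "('n \<Rightarrow> 'a::field) set set" where
  "proj_space = {proj_point x | x. x \<noteq> (\<lambda>_. 0)}"

text \<open>A form f vanishes at a projective point P (i.e. at a, equivalently every, representative).\<close>
definition vanishes_at :: "('n::finite, 'a::field) mpoly \<Rightarrow> ('n \<Rightarrow> 'a) set \<Rightarrow> bool" where
  "vanishes_at f P \<longleftrightarrow> (\<forall>x\<in>P. peval f x = 0)"

definition vanishing_ideal :: "('n::finite \<Rightarrow> 'a::field) set set \<Rightarrow> ('n, 'a) mpoly set" where
  "vanishing_ideal X = ideal_gen {f. (\<exists>d. homogeneous d f) \<and> (\<forall>P\<in>X. vanishes_at f P)}"

definition V_X :: "('n::finite \<Rightarrow> 'a::field) set set \<Rightarrow> ('n, 'a) mpoly \<Rightarrow> ('n \<Rightarrow> 'a) set set" where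
  "V_X X f = {P \<in> X. vanishes_at f P}"

definition delta_X :: "('n::finite \<Rightarrow> 'a::field) set set \<Rightarrow> nat \<Rightarrow> nat" where
  "delta_X X d = Min {card X - card (V_X X f) | f :: ('n, 'a) mpoly.
      f \<in> S_deg d \<and> f \<notin> vanishing_ideal X}"

end

theory Submission
  imports Defs "HOL-Computational_Algebra.Polynomial"
begin

text \<open>For a representative \<open>x\<close> of a point, \<open>f \<mapsto> f(t x)\<close> is a surjective ring homomorphism
  \<open>S \<rightarrow> K[t]\<close>; its kernel is the ideal of the point, and \<open>I(X)\<close> is the intersection of these
  kernels. A prime containing \<open>I(X)\<close> contains one of them (otherwise it would contain a product
  of elements it does not contain), and \<open>K[t]\<close> admits no chain of three primes, so every ideal
  between \<open>I(X)\<close> and the ideal of a point \<open>Q \<in> X\<close> has Krull dimension 1. Products of separating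
  linear forms interpolate on \<open>X\<close>, so in large degree the forms vanishing on \<open>V \<subseteq> X\<close> have
  codimension \<open>|V|\<close>. Hence \<open>deg(S/I(X)) = |X|\<close> and \<open>deg(S/(I(X), f)) = |V\<^sub>X(f)|\<close> whenever \<open>f\<close>
  vanishes somewhere on \<open>X\<close>; and the forms of degree \<open>d\<close> outside \<open>I(X)\<close> that are zero divisors
  modulo \<open>I(X)\<close> are exactly those with a zero on \<open>X\<close>. So both minimum distances equal \<open>|X|\<close>
  minus the largest number of zeros on \<open>X\<close> of a form of degree \<open>d\<close> outside \<open>I(X)\<close>, which is
  less than \<open>|X|\<close>.\<close>

section \<open>Evaluation homomorphisms\<close>

lemma poly_mapping_sum_single:
  fixes f :: "'k \<Rightarrow>\<^sub>0 'b::comm_monoid_add"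
  shows "f = (\<Sum>m\<in>Poly_Mapping.keys f. Poly_Mapping.single m (Poly_Mapping.lookup f m))"
  by (rule poly_mapping_eqI)
     (auto simp: lookup_sum lookup_single when_def in_keys_iff sum.delta cong: sum.cong)

definition mpoly_eval ::
  "('a::zero \<Rightarrow> 'b::comm_ring_1) \<Rightarrow> (('n \<Rightarrow>\<^sub>0 nat) \<Rightarrow> 'b) \<Rightarrow> ('n, 'a) mpoly \<Rightarrow> 'b" where
  "mpoly_eval c \<phi> f = (\<Sum>m\<in>Poly_Mapping.keys f. c (Poly_Mapping.lookup f m) * \<phi> m)"

locale mpoly_eval_hom =
  fixes c :: "'a::comm_ring_1 \<Rightarrow> 'b::comm_ring_1" and \<phi> :: "('n \<Rightarrow>\<^sub>0 nat) \<Rightarrow> 'b"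
  assumes c_0: "c 0 = 0" and c_1: "c 1 = 1" and c_add: "c (a + b) = c a + c b"
    and c_mult: "c (a * b) = c a * c b"
    and \<phi>_0: "\<phi> 0 = 1" and \<phi>_add: "\<phi> (m + n) = \<phi> m * \<phi> n"
begin

lemma mpoly_eval_add: "mpoly_eval c \<phi> (f + g) = mpoly_eval c \<phi> f + mpoly_eval c \<phi> g"
  unfolding mpoly_eval_def
  by (rule setsum_keys_plus_distrib) (auto simp: c_0 c_add algebra_simps)

lemma mpoly_eval_zero [simp]: "mpoly_eval c \<phi> 0 = 0"
  by (simp add: mpoly_eval_def)

lemma mpoly_eval_single [simp]: "mpoly_eval c \<phi> (Poly_Mapping.single m a) = c a * \<phi> m"
  by (simp add: mpoly_eval_def c_0)

lemma mpoly_eval_sum: "mpoly_eval c \<phi> (sum F A) = (\<Sum>x\<in>A. mpoly_eval c \<phi> (F x))"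
  by (induction A rule: infinite_finite_induct) (auto simp: mpoly_eval_add)

lemma mpoly_eval_diff: "mpoly_eval c \<phi> (f - g) = mpoly_eval c \<phi> f - mpoly_eval c \<phi> g"
  using mpoly_eval_add[of "f - g" g] by simp

lemma mpoly_eval_single_mult:
  "mpoly_eval c \<phi> (Poly_Mapping.single a x * g) = c x * \<phi> a * mpoly_eval c \<phi> g"
proof -
  have "Poly_Mapping.single a x * g = (\<Sum>m\<in>Poly_Mapping.keys g.
      Poly_Mapping.single (a + m) (x * Poly_Mapping.lookup g m))"
    by (subst poly_mapping_sum_single[of g]) (simp add: sum_distrib_left mult_single)
  then have "mpoly_eval c \<phi> (Poly_Mapping.single a x * g)
      = (\<Sum>m\<in>Poly_Mapping.keys g. c x * \<phi> a * (c (Poly_Mapping.lookup g m) * \<phi> m))"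
    by (simp add: mpoly_eval_sum c_mult \<phi>_add mult_ac)
  then show ?thesis by (simp add: mpoly_eval_def sum_distrib_left)
qed

lemma mpoly_eval_mult: "mpoly_eval c \<phi> (f * g) = mpoly_eval c \<phi> f * mpoly_eval c \<phi> g"
proof -
  have "f * g = (\<Sum>m\<in>Poly_Mapping.keys f. Poly_Mapping.single m (Poly_Mapping.lookup f m) * g)"
    by (subst poly_mapping_sum_single[of f]) (simp add: sum_distrib_right)
  then have "mpoly_eval c \<phi> (f * g)
      = (\<Sum>m\<in>Poly_Mapping.keys f. c (Poly_Mapping.lookup f m) * \<phi> m * mpoly_eval c \<phi> g)"
    by (simp add: mpoly_eval_sum mpoly_eval_single_mult)
  then show ?thesis by (simp add: mpoly_eval_def sum_distrib_right)
qed

lemma mpoly_eval_one [simp]: "mpoly_eval c \<phi> 1 = 1"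
  using mpoly_eval_single[of 0 1] by (simp add: c_1 \<phi>_0 del: mpoly_eval_single)

lemma mpoly_eval_prod: "mpoly_eval c \<phi> (prod F A) = (\<Prod>x\<in>A. mpoly_eval c \<phi> (F x))"
  by (induction A rule: infinite_finite_induct) (auto simp: mpoly_eval_mult)

lemma mpoly_eval_power: "mpoly_eval c \<phi> (f ^ k) = mpoly_eval c \<phi> f ^ k"
  by (induction k) (auto simp: mpoly_eval_mult)

end

definition monom_val :: "('n::finite \<Rightarrow> 'a::comm_ring_1) \<Rightarrow> ('n \<Rightarrow>\<^sub>0 nat) \<Rightarrow> 'a" where
  "monom_val x m = (\<Prod>i\<in>UNIV. x i ^ Poly_Mapping.lookup m i)"

lemma monom_val_add: "monom_val x (m + n) = monom_val x m * monom_val x n"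
  by (simp add: monom_val_def lookup_add power_add prod.distrib)

lemma monom_val_0 [simp]: "monom_val x 0 = 1"
  by (simp add: monom_val_def)

lemma monom_val_single: "monom_val x (Poly_Mapping.single i k) = x i ^ k"
proof -
  have "monom_val x (Poly_Mapping.single i k) = (\<Prod>j\<in>UNIV. if j = i then x i ^ k else 1)"
    unfolding monom_val_def by (rule prod.cong) (auto simp: lookup_single when_def)
  then show ?thesis by simp
qed

interpretation peval: mpoly_eval_hom id "monom_val x"
  by unfold_locales (auto simp: monom_val_add)

lemma peval_eq_mpoly_eval: "peval f x = mpoly_eval id (monom_val x) f"
  by (simp add: peval_def mpoly_eval_def monom_val_def)

lemma peval_add: "peval (f + g) x = peval f x + peval g x"
  by (simp add: peval_eq_mpoly_eval peval.mpoly_eval_add)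

lemma peval_mult: "peval (f * g) x = peval f x * peval g x"
  by (simp add: peval_eq_mpoly_eval peval.mpoly_eval_mult)

lemma peval_diff: "peval (f - g) x = peval f x - peval g x"
  by (simp add: peval_eq_mpoly_eval peval.mpoly_eval_diff)

lemma peval_sum: "peval (sum F A) x = (\<Sum>a\<in>A. peval (F a) x)"
  by (simp add: peval_eq_mpoly_eval peval.mpoly_eval_sum)

lemma peval_prod: "peval (prod F A) x = (\<Prod>a\<in>A. peval (F a) x)"
  by (simp add: peval_eq_mpoly_eval peval.mpoly_eval_prod)

lemma peval_power: "peval (f ^ k) x = peval f x ^ k"
  by (simp add: peval_eq_mpoly_eval peval.mpoly_eval_power)

lemma peval_zero [simp]: "peval 0 x = 0"
  by (simp add: peval_eq_mpoly_eval)

lemma peval_pscale: "peval (pscale a f) x = a * peval f x"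
  by (simp add: peval_eq_mpoly_eval pscale_def peval.mpoly_eval_single_mult)

section \<open>Homogeneous forms\<close>

lemma mon_deg_add: "mon_deg (m + n) = mon_deg m + mon_deg n"
  by (simp add: mon_deg_def lookup_add sum.distrib)

lemma mon_deg_0 [simp]: "mon_deg 0 = 0"
  by (simp add: mon_deg_def)

lemma mon_deg_single [simp]: "mon_deg (Poly_Mapping.single (i::'n::finite) k) = k"
  by (simp add: mon_deg_def lookup_single when_def)

lemma finite_mon_deg_eq: "finite {m :: 'n::finite \<Rightarrow>\<^sub>0 nat. mon_deg m = D}"
proof -
  have "Poly_Mapping.lookup ` {m :: 'n \<Rightarrow>\<^sub>0 nat. mon_deg m = D} \<subseteq> Pi\<^sub>E UNIV (\<lambda>_. {..D})"
  proof safe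
    fix m :: "'n \<Rightarrow>\<^sub>0 nat" and i
    show "Poly_Mapping.lookup m i \<le> mon_deg m"
      unfolding mon_deg_def by (rule member_le_sum) auto
  qed auto
  then have "finite (Poly_Mapping.lookup ` {m :: 'n \<Rightarrow>\<^sub>0 nat. mon_deg m = D})"
    by (rule finite_subset) (auto intro: finite_PiE)
  moreover have "inj_on Poly_Mapping.lookup {m :: 'n \<Rightarrow>\<^sub>0 nat. mon_deg m = D}"
    by (rule inj_onI) (metis poly_mapping.lookup_inject)
  ultimately show ?thesis by (rule finite_imageD)
qed

lemma homogeneous_0 [simp]: "homogeneous d 0"
  by (simp add: homogeneous_def)

lemma homogeneous_single: "mon_deg m = d \<Longrightarrow> homogeneous d (Poly_Mapping.single m a)"
  by (simp add: homogeneous_def)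

lemma homogeneous_add: "homogeneous d f \<Longrightarrow> homogeneous d g \<Longrightarrow> homogeneous d (f + g)"
  unfolding homogeneous_def using keys_add[of f g] by blast

lemma homogeneous_diff:
  fixes f g :: "('n::finite, 'a::ab_group_add) mpoly"
  shows "homogeneous d f \<Longrightarrow> homogeneous d g \<Longrightarrow> homogeneous d (f - g)"
  using homogeneous_add[of d f "- g"] by (simp add: homogeneous_def keys_minus)

lemma homogeneous_sum: "(\<And>x. x \<in> A \<Longrightarrow> homogeneous d (F x)) \<Longrightarrow> homogeneous d (sum F A)"
  by (induction A rule: infinite_finite_induct) (auto intro: homogeneous_add)

lemma homogeneous_mult:
  fixes f g :: "('n::finite, 'a::comm_semiring_0) mpoly"
  shows "homogeneous d f \<Longrightarrow> homogeneous e g \<Longrightarrow> homogeneous (d + e) (f * g)"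
  unfolding homogeneous_def using keys_mult[of f g] by (force simp: mon_deg_add)

lemma homogeneous_1 [simp]: "homogeneous 0 (1::('n::finite, 'a::comm_semiring_1) mpoly)"
  by (simp add: homogeneous_def)

lemma homogeneous_prod:
  fixes F :: "'i \<Rightarrow> ('n::finite, 'a::comm_semiring_1) mpoly"
  shows "(\<And>x. x \<in> A \<Longrightarrow> homogeneous (D x) (F x)) \<Longrightarrow> homogeneous (sum D A) (prod F A)"
  by (induction A rule: infinite_finite_induct) (auto intro: homogeneous_mult)

lemma homogeneous_power:
  fixes f :: "('n::finite, 'a::comm_semiring_1) mpoly"
  shows "homogeneous d f \<Longrightarrow> homogeneous (k * d) (f ^ k)"
  by (induction k) (auto dest: homogeneous_mult)

lemma homogeneous_pscale: "homogeneous d f \<Longrightarrow> homogeneous d (pscale a f)"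
  unfolding pscale_def using homogeneous_mult[OF homogeneous_single[of 0 0 a], of d f] by simp

lemma S_deg_iff [simp]: "f \<in> S_deg d \<longleftrightarrow> homogeneous d f"
  by (simp add: S_deg_def)

lemma lookup_hcomp:
  "Poly_Mapping.lookup (hcomp d f) m = (if mon_deg m = d then Poly_Mapping.lookup f m else 0)"
proof -
  have "finite {m. (if mon_deg m = d then Poly_Mapping.lookup f m else 0) \<noteq> 0}"
    by (rule finite_subset[of _ "Poly_Mapping.keys f"]) (auto simp: in_keys_iff)
  then show ?thesis by (simp add: hcomp_def)
qed

lemma keys_hcomp: "Poly_Mapping.keys (hcomp d f) = {m \<in> Poly_Mapping.keys f. mon_deg m = d}"
  by (auto simp: in_keys_iff lookup_hcomp split: if_splits)

lemma homogeneous_hcomp: "homogeneous d (hcomp d f)"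
  by (simp add: homogeneous_def keys_hcomp)

lemma hcomp_homogeneous: "homogeneous d f \<Longrightarrow> hcomp e f = (if e = d then f else 0)"
  by (rule poly_mapping_eqI) (auto simp: lookup_hcomp homogeneous_def in_keys_iff)

lemma sum_hcomp: "\<exists>N. f = (\<Sum>e\<le>N. hcomp e f)"
proof (intro exI poly_mapping_eqI)
  fix m
  let ?N = "Max (mon_deg ` Poly_Mapping.keys f)"
  have "(\<Sum>e\<le>?N. Poly_Mapping.lookup (hcomp e f) m)
      = (\<Sum>e\<le>?N. if e = mon_deg m then Poly_Mapping.lookup f m else 0)"
    by (rule sum.cong) (auto simp: lookup_hcomp)
  also have "\<dots> = Poly_Mapping.lookup f m"
    by (cases "m \<in> Poly_Mapping.keys f") (auto simp: in_keys_iff)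
  finally show "Poly_Mapping.lookup f m = Poly_Mapping.lookup (\<Sum>e\<le>?N. hcomp e f) m"
    by (simp add: lookup_sum)
qed

lemma peval_homogeneous_scale:
  assumes "homogeneous d f"
  shows "peval f (\<lambda>i. a * x i) = a ^ d * peval f x"
proof -
  have "monom_val (\<lambda>i. a * x i) m = a ^ mon_deg m * monom_val x m" for m
    by (simp add: monom_val_def mon_deg_def power_mult_distrib prod.distrib power_sum)
  then show ?thesis using assms
    by (simp add: peval_def homogeneous_def sum_distrib_left monom_val_def[symmetric] mult_ac
        cong: sum.cong)
qed

definition var :: "'n \<Rightarrow> ('n, 'a::field) mpoly" where
  "var i = Poly_Mapping.single (Poly_Mapping.single i 1) 1"

lemma peval_var [simp]: "peval (var i) x = x i"
  by (simp add: var_def peval_eq_mpoly_eval monom_val_single)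

lemma homogeneous_var: "homogeneous 1 (var (i::'n::finite))"
  unfolding var_def by (rule homogeneous_single) simp

section \<open>Restriction to the line through a point\<close>

text \<open>\<open>line_poly x f\<close> is the univariate polynomial \<open>f(t x)\<close>.\<close>

definition line_poly :: "('n::finite \<Rightarrow> 'a::field) \<Rightarrow> ('n, 'a) mpoly \<Rightarrow> 'a poly" where
  "line_poly x = mpoly_eval (\<lambda>a. [:a:]) (\<lambda>m. monom (monom_val x m) (mon_deg m))"

interpretation line_poly: mpoly_eval_hom "\<lambda>a. [:a:]" "\<lambda>m. monom (monom_val x m) (mon_deg m)"
  by unfold_locales (auto simp: monom_val_add mon_deg_add mult_monom monom_eq_1 one_pCons)

lemma line_poly_add: "line_poly x (f + g) = line_poly x f + line_poly x g"
  by (simp add: line_poly_def line_poly.mpoly_eval_add)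

lemma line_poly_mult: "line_poly x (f * g) = line_poly x f * line_poly x g"
  by (simp add: line_poly_def line_poly.mpoly_eval_mult)

lemma line_poly_diff: "line_poly x (f - g) = line_poly x f - line_poly x g"
  by (simp add: line_poly_def line_poly.mpoly_eval_diff)

lemma line_poly_sum: "line_poly x (sum F A) = (\<Sum>a\<in>A. line_poly x (F a))"
  by (simp add: line_poly_def line_poly.mpoly_eval_sum)

lemma line_poly_prod: "line_poly x (prod F A) = (\<Prod>a\<in>A. line_poly x (F a))"
  by (simp add: line_poly_def line_poly.mpoly_eval_prod)

lemma line_poly_one [simp]: "line_poly x 1 = 1"
  by (simp add: line_poly_def)

lemma line_poly_zero [simp]: "line_poly x 0 = 0"
  by (simp add: line_poly_def)

lemma line_poly_single:
  "line_poly x (Poly_Mapping.single m a) = monom (a * monom_val x m) (mon_deg m)"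
  by (simp add: line_poly_def smult_monom)

lemma coeff_line_poly: "coeff (line_poly x f) e = peval (hcomp e f) x"
proof -
  have "coeff (line_poly x f) e = (\<Sum>m\<in>Poly_Mapping.keys f.
      (if mon_deg m = e then Poly_Mapping.lookup f m * monom_val x m else 0))"
    unfolding line_poly_def mpoly_eval_def
    by (auto simp: coeff_sum coeff_monom intro!: sum.cong)
  also have "\<dots> = (\<Sum>m\<in>{m \<in> Poly_Mapping.keys f. mon_deg m = e}.
      Poly_Mapping.lookup f m * monom_val x m)"
    by (simp add: sum.inter_filter)
  also have "\<dots> = peval (hcomp e f) x"
    by (simp add: peval_def keys_hcomp lookup_hcomp monom_val_def)
  finally show ?thesis .
qed

lemma line_poly_homogeneous: "homogeneous d f \<Longrightarrow> line_poly x f = monom (peval f x) d"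
  by (rule poly_eqI) (auto simp: coeff_line_poly hcomp_homogeneous coeff_monom)

lemma line_poly_surj:
  assumes "x \<noteq> (\<lambda>_. 0)"
  shows "\<exists>g. line_poly x g = p"
proof -
  obtain i where xi: "x i \<noteq> 0" using assms by auto
  define g where "g = (\<Sum>k\<le>degree p.
    Poly_Mapping.single (Poly_Mapping.single i k) (coeff p k / x i ^ k))"
  have "line_poly x g = (\<Sum>k\<le>degree p. monom (coeff p k) k)"
    unfolding g_def line_poly_sum
    by (rule sum.cong) (auto simp: line_poly_single monom_val_single xi)
  also have "\<dots> = p" by (rule poly_as_sum_of_monoms)
  finally show ?thesis by blast
qed

lemma is_ideal_ideal_gen: "is_ideal (ideal_gen A)"
  by (auto simp: ideal_gen_def is_ideal_def)

lemma ideal_gen_subset: "A \<subseteq> ideal_gen A"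
  by (auto simp: ideal_gen_def)

lemma ideal_gen_least: "is_ideal J \<Longrightarrow> A \<subseteq> J \<Longrightarrow> ideal_gen A \<subseteq> J"
  by (auto simp: ideal_gen_def)

lemma ideal_0: "is_ideal I \<Longrightarrow> 0 \<in> I"
  by (simp add: is_ideal_def)

lemma ideal_add: "is_ideal I \<Longrightarrow> a \<in> I \<Longrightarrow> b \<in> I \<Longrightarrow> a + b \<in> I"
  by (simp add: is_ideal_def)

lemma ideal_mult_left: "is_ideal I \<Longrightarrow> a \<in> I \<Longrightarrow> r * a \<in> I"
  by (simp add: is_ideal_def)

lemma ideal_mult_right: "is_ideal I \<Longrightarrow> a \<in> I \<Longrightarrow> a * r \<in> I"
  by (simp add: is_ideal_def mult.commute)

lemma ideal_diff: "is_ideal I \<Longrightarrow> a \<in> I \<Longrightarrow> b \<in> I \<Longrightarrow> a - b \<in> I"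
  using ideal_add[of I a "-1 * b"] ideal_mult_left[of I b "-1"] by simp

lemma ideal_sum: "is_ideal I \<Longrightarrow> (\<And>x. x \<in> A \<Longrightarrow> F x \<in> I) \<Longrightarrow> sum F A \<in> I"
  by (induction A rule: infinite_finite_induct) (auto intro: ideal_add ideal_0)

lemma one_not_in_prime_ideal: "prime_ideal P \<Longrightarrow> (1::'r::comm_ring_1) \<notin> P"
  unfolding prime_ideal_def is_ideal_def by (metis UNIV_eq_I mult.right_neutral)

lemma prime_ideal_prod:
  assumes P: "prime_ideal P" and "finite A" and "prod F A \<in> P"
  shows "\<exists>a\<in>A. F a \<in> P"
  using assms(2,3)
proof (induction A rule: finite_induct)
  case empty
  then show ?case using one_not_in_prime_ideal[OF P] by simp
next
  case (insert a A)
  then have "F a \<in> P \<or> prod F A \<in> P" using P by (simp add: prime_ideal_def)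
  then show ?case using insert by blast
qed

definition point_ideal :: "('n::finite \<Rightarrow> 'a::field) \<Rightarrow> ('n, 'a) mpoly set" where
  "point_ideal x = {g. line_poly x g = 0}"

lemma point_ideal_iff: "g \<in> point_ideal x \<longleftrightarrow> (\<forall>e. peval (hcomp e g) x = 0)"
  by (auto simp: point_ideal_def poly_eq_iff coeff_line_poly)

lemma homogeneous_in_point_ideal_iff:
  "homogeneous d f \<Longrightarrow> f \<in> point_ideal x \<longleftrightarrow> peval f x = 0"
  by (simp add: point_ideal_def line_poly_homogeneous)

lemma prime_ideal_point_ideal:
  assumes "x \<noteq> (\<lambda>_. 0)"
  shows "prime_ideal (point_ideal x)"
proof -
  have "1 \<notin> point_ideal x" by (simp add: point_ideal_def)
  then have "point_ideal x \<noteq> UNIV" by blast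
  moreover have "is_ideal (point_ideal x)"
    by (auto simp: is_ideal_def point_ideal_def line_poly_add line_poly_mult)
  moreover have "a \<in> point_ideal x \<or> b \<in> point_ideal x" if "a * b \<in> point_ideal x" for a b
    using that by (simp add: point_ideal_def line_poly_mult)
  ultimately show ?thesis by (simp add: prime_ideal_def)
qed

section \<open>Points of projective space\<close>

definition rep :: "('n \<Rightarrow> 'a::field) set \<Rightarrow> ('n \<Rightarrow> 'a)" where
  "rep P = (SOME x. x \<noteq> (\<lambda>_. 0) \<and> P = proj_point x)"

lemma rep:
  assumes "P \<in> proj_space"
  shows rep_nonzero: "rep P \<noteq> (\<lambda>_. 0)" and proj_point_rep: "proj_point (rep P) = P"
proof -
  have "\<exists>x. x \<noteq> (\<lambda>_. 0) \<and> P = proj_point x" using assms by (auto simp: proj_space_def)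
  then have "rep P \<noteq> (\<lambda>_. 0) \<and> P = proj_point (rep P)" unfolding rep_def by (rule someI_ex)
  then show "rep P \<noteq> (\<lambda>_. 0)" "proj_point (rep P) = P" by auto
qed

lemma proj_point_scale:
  fixes x :: "'n \<Rightarrow> 'a::field"
  assumes "a \<noteq> 0"
  shows "proj_point (\<lambda>i. a * x i) = proj_point x"
  unfolding proj_point_def
proof safe
  fix c :: 'a assume "c \<noteq> 0"
  then show "\<exists>c'. c' \<noteq> 0 \<and> (\<lambda>i. c * (a * x i)) = (\<lambda>i. c' * x i)"
    using assms by (intro exI[of _ "c * a"]) (auto simp: mult.assoc)
next
  fix c :: 'a assume "c \<noteq> 0"
  then show "\<exists>c'. c' \<noteq> 0 \<and> (\<lambda>i. c * x i) = (\<lambda>i. c' * (a * x i))"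
    using assms by (intro exI[of _ "c / a"]) (auto simp: fun_eq_iff)
qed

lemma mem_proj_point_iff:
  assumes "P \<in> proj_space"
  shows "y \<in> P \<longleftrightarrow> (\<exists>a. a \<noteq> 0 \<and> y = (\<lambda>i. a * rep P i))"
proof -
  have "y \<in> P \<longleftrightarrow> y \<in> proj_point (rep P)" by (simp only: proj_point_rep[OF assms])
  then show ?thesis by (simp add: proj_point_def)
qed

lemma vanishes_at_iff_rep:
  assumes P: "P \<in> proj_space" and f: "homogeneous d f"
  shows "vanishes_at f P \<longleftrightarrow> peval f (rep P) = 0"
proof
  have "rep P \<in> P" by (subst mem_proj_point_iff[OF P]) (auto intro!: exI[of _ 1])
  then show "vanishes_at f P \<Longrightarrow> peval f (rep P) = 0" by (simp add: vanishes_at_def)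
next
  assume rep0: "peval f (rep P) = 0"
  show "vanishes_at f P" unfolding vanishes_at_def
  proof
    fix y assume "y \<in> P"
    then obtain a where "y = (\<lambda>i. a * rep P i)" using mem_proj_point_iff[OF P] by blast
    then show "peval f y = 0" using rep0 f by (simp add: peval_homogeneous_scale)
  qed
qed

lemma V_X_eq:
  assumes "X \<subseteq> proj_space" "homogeneous d f"
  shows "V_X X f = {P \<in> X. peval f (rep P) = 0}"
  using assms vanishes_at_iff_rep[of _ d f] unfolding V_X_def by blast

lemma is_ideal_vanishing_ideal: "is_ideal (vanishing_ideal X)"
  unfolding vanishing_ideal_def by (rule is_ideal_ideal_gen)

lemma vanishing_ideal_eq:
  assumes X: "X \<subseteq> proj_space"
  shows "vanishing_ideal X = (\<Inter>P\<in>X. point_ideal (rep P))"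
proof
  have "is_ideal (\<Inter>P\<in>X. point_ideal (rep P))"
    by (auto simp: is_ideal_def point_ideal_def line_poly_add line_poly_mult)
  moreover have "{f. (\<exists>d. homogeneous d f) \<and> (\<forall>P\<in>X. vanishes_at f P)}
      \<subseteq> (\<Inter>P\<in>X. point_ideal (rep P))"
  proof safe
    fix f d P assume f: "homogeneous d f" "\<forall>P\<in>X. vanishes_at f P" and "P \<in> X"
    then have "P \<in> proj_space" "vanishes_at f P" using X by blast+
    then show "f \<in> point_ideal (rep P)"
      by (simp add: vanishes_at_iff_rep[OF _ f(1)] homogeneous_in_point_ideal_iff[OF f(1)])
  qed
  ultimately show "vanishing_ideal X \<subseteq> (\<Inter>P\<in>X. point_ideal (rep P))"
    unfolding vanishing_ideal_def by (rule ideal_gen_least)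
next
  show "(\<Inter>P\<in>X. point_ideal (rep P)) \<subseteq> vanishing_ideal X"
  proof
    fix g assume g: "g \<in> (\<Inter>P\<in>X. point_ideal (rep P))"
    obtain N where N: "g = (\<Sum>e\<le>N. hcomp e g)" using sum_hcomp by blast
    have "hcomp e g \<in> vanishing_ideal X" for e
    proof -
      have "vanishes_at (hcomp e g) P" if "P \<in> X" for P
      proof -
        have "P \<in> proj_space" using X that by blast
        moreover have "peval (hcomp e g) (rep P) = 0" using g that by (simp add: point_ideal_iff)
        ultimately show ?thesis by (simp add: vanishes_at_iff_rep[OF _ homogeneous_hcomp])
      qed
      then have "hcomp e g \<in> {f. (\<exists>d. homogeneous d f) \<and> (\<forall>P\<in>X. vanishes_at f P)}"
        using homogeneous_hcomp by blast
      then show ?thesis unfolding vanishing_ideal_def by (rule subsetD[OF ideal_gen_subset])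
    qed
    then have "(\<Sum>e\<le>N. hcomp e g) \<in> vanishing_ideal X"
      by (intro ideal_sum is_ideal_vanishing_ideal)
    then show "g \<in> vanishing_ideal X" using N by simp
  qed
qed

lemma homogeneous_in_vanishing_ideal_iff:
  "X \<subseteq> proj_space \<Longrightarrow> homogeneous d f \<Longrightarrow>
    f \<in> vanishing_ideal X \<longleftrightarrow> (\<forall>P\<in>X. peval f (rep P) = 0)"
  by (simp add: vanishing_ideal_eq homogeneous_in_point_ideal_iff)

lemma vanishing_ideal_Int_S_deg:
  "X \<subseteq> proj_space \<Longrightarrow>
    vanishing_ideal X \<inter> S_deg D = {g \<in> S_deg D. \<forall>P\<in>X. peval g (rep P) = 0}"
  using homogeneous_in_vanishing_ideal_iff by auto

section \<open>Interpolation by forms\<close>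

lemma separating_linear_form:
  assumes P: "P \<in> proj_space" and Q: "Q \<in> proj_space" and "P \<noteq> Q"
  shows "\<exists>l. homogeneous 1 l \<and> peval l (rep Q) = 0 \<and> peval l (rep P) \<noteq> (0::'a::field)"
proof (rule ccontr)
  assume no_form: "\<not> ?thesis"
  define y where "y = rep Q"
  define p where "p = rep P"
  obtain i where yi: "y i \<noteq> 0" using rep_nonzero[OF Q] by (auto simp: y_def)
  text \<open>Every linear form \<open>y\<^sub>i t\<^sub>j - y\<^sub>j t\<^sub>i\<close> vanishes at \<open>y\<close>, hence at \<open>p\<close>, so \<open>p\<close> is
    proportional to \<open>y\<close>.\<close>
  have p_prop: "p j = (p i / y i) * y j" for j
  proof -
    let ?l = "pscale (y i) (var j) - pscale (y j) (var i)"
    have "homogeneous 1 ?l"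
      by (intro homogeneous_diff homogeneous_pscale homogeneous_var)
    moreover have "peval ?l y = 0" by (simp add: peval_diff peval_pscale mult.commute)
    ultimately have "peval ?l p = 0" using no_form by (auto simp: y_def p_def)
    then have "y i * p j = y j * p i" by (simp add: peval_diff peval_pscale)
    then show ?thesis using yi by (simp add: field_simps)
  qed
  have "p i / y i \<noteq> 0"
  proof
    assume "p i / y i = 0"
    then have "p j = 0" for j using p_prop[of j] by (simp only: mult_zero_left)
    then show False using rep_nonzero[OF P] by (auto simp: p_def fun_eq_iff)
  qed
  have "P = proj_point p" by (simp add: p_def proj_point_rep[OF P])
  also have "p = (\<lambda>j. (p i / y i) * y j)" by (rule ext) (rule p_prop)
  also have "proj_point \<dots> = proj_point y" by (rule proj_point_scale) fact
  also have "\<dots> = Q" by (simp add: y_def proj_point_rep[OF Q])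
  finally show False using \<open>P \<noteq> Q\<close> by simp
qed

lemma delta_form_exists:
  assumes X: "X \<subseteq> proj_space" "finite X" and P: "P \<in> X" and D: "card X \<le> D + 1"
  shows "\<exists>h. homogeneous D h \<and> peval h (rep P) = (1::'a::field)
    \<and> (\<forall>Q\<in>X - {P}. peval h (rep Q) = 0)"
proof -
  have "P \<in> proj_space" using X P by blast
  have "\<forall>Q\<in>X - {P}. \<exists>l. homogeneous 1 l \<and> peval l (rep Q) = 0 \<and> peval l (rep P) \<noteq> (0::'a)"
    using separating_linear_form[OF \<open>P \<in> proj_space\<close>] X by blast
  then obtain L where L: "\<And>Q. Q \<in> X - {P} \<Longrightarrow>
      homogeneous 1 (L Q) \<and> peval (L Q) (rep Q) = 0 \<and> peval (L Q) (rep P) \<noteq> (0::'a)"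
    by metis
  obtain i where i: "rep P i \<noteq> 0" using rep_nonzero[OF \<open>P \<in> proj_space\<close>] by auto
  define h where "h = var i ^ (D - card (X - {P})) * (\<Prod>Q\<in>X - {P}. L Q)"
  have "homogeneous ((D - card (X - {P})) * 1 + (\<Sum>Q\<in>X - {P}. 1)) h"
    unfolding h_def
    by (intro homogeneous_mult homogeneous_power homogeneous_var homogeneous_prod) (use L in auto)
  moreover have "(D - card (X - {P})) * 1 + (\<Sum>Q\<in>X - {P}. 1) = D" using D X P by simp
  ultimately have "homogeneous D h" by simp
  moreover have "peval h (rep P) \<noteq> 0"
    using L i X by (simp add: h_def peval_mult peval_power peval_prod)
  moreover have "peval h (rep Q) = 0" if "Q \<in> X - {P}" for Q
    using L[OF that] that X by (simp add: h_def peval_mult peval_prod) blast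
  ultimately show ?thesis
    by (intro exI[of _ "pscale (1 / peval h (rep P)) h"])
      (auto simp: homogeneous_pscale peval_pscale)
qed

lemma interpolating_form_exists:
  assumes X: "X \<subseteq> proj_space" "finite X" and D: "card X \<le> D + 1"
  shows "\<exists>h. homogeneous D h \<and> (\<forall>P\<in>X. peval h (rep P) = (v P :: 'a::field))"
proof -
  have "\<forall>P\<in>X. \<exists>h. homogeneous D h \<and> peval h (rep P) = (1::'a)
      \<and> (\<forall>Q\<in>X - {P}. peval h (rep Q) = 0)"
    using delta_form_exists[OF X _ D] by blast
  then obtain H where H: "\<And>P. P \<in> X \<Longrightarrow> homogeneous D (H P) \<and> peval (H P) (rep P) = 1
      \<and> (\<forall>Q\<in>X - {P}. peval (H P) (rep Q) = 0)"
    by metis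
  define h where "h = (\<Sum>Q\<in>X. pscale (v Q) (H Q))"
  have "peval h (rep P) = v P" if "P \<in> X" for P
  proof -
    have "peval h (rep P) = (\<Sum>Q\<in>X. if Q = P then v Q else 0)"
      unfolding h_def peval_sum peval_pscale
      by (rule sum.cong) (use H that in auto)
    then show ?thesis using that X by simp
  qed
  moreover have "homogeneous D h"
    unfolding h_def using H by (intro homogeneous_sum homogeneous_pscale) blast
  ultimately show ?thesis by blast
qed

section \<open>Codimension of a joint kernel\<close>

locale biorthogonal_family = vector_space scale
  for scale :: "'a::field \<Rightarrow> 'b::ab_group_add \<Rightarrow> 'b" +
  fixes Y :: "'i set" and ev :: "'i \<Rightarrow> 'b \<Rightarrow> 'a" and h :: "'i \<Rightarrow> 'b"
  assumes finite_index: "finite Y"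
    and ev_add: "ev y (u + v) = ev y u + ev y v"
    and ev_scale: "ev y (scale c u) = c * ev y u"
    and ev_h: "y \<in> Y \<Longrightarrow> y' \<in> Y \<Longrightarrow> ev y' (h y) = (if y' = y then 1 else 0)"
begin

lemma ev_zero: "ev y 0 = 0"
  using ev_scale[of y 0 0] by simp

lemma ev_diff: "ev y (u - v) = ev y u - ev y v"
  using ev_add[of y "u - v" v] by simp

lemma ev_sum: "ev y (sum f A) = (\<Sum>x\<in>A. ev y (f x))"
  by (induction A rule: infinite_finite_induct) (auto simp: ev_zero ev_add)

lemma ev_sum_h:
  assumes "y \<in> Y"
  shows "ev y (\<Sum>y'\<in>Y. scale (c y') (h y')) = c y"
proof -
  have "(\<Sum>y'\<in>Y. c y' * ev y (h y')) = (\<Sum>y'\<in>Y. if y' = y then c y' else 0)"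
    by (rule sum.cong) (auto simp: ev_h assms)
  then show ?thesis using assms finite_index by (simp add: ev_sum ev_scale)
qed

lemma inj_on_h: "inj_on h Y"
  by (rule inj_onI) (metis ev_h zero_neq_one)

lemma kernel_disjoint_h:
  assumes "\<And>b y. b \<in> B \<Longrightarrow> y \<in> Y \<Longrightarrow> ev y b = 0"
  shows "B \<inter> h ` Y = {}"
  using assms ev_h by fastforce

lemma independent_Un_h:
  assumes B: "independent B" "finite B" and ker: "\<And>b y. b \<in> B \<Longrightarrow> y \<in> Y \<Longrightarrow> ev y b = 0"
  shows "independent (B \<union> h ` Y)"
proof (rule independent_if_scalars_zero)
  show "finite (B \<union> h ` Y)" using B(2) finite_index by simp
next
  fix c v assume sum0: "(\<Sum>x\<in>B \<union> h ` Y. scale (c x) x) = 0" and v: "v \<in> B \<union> h ` Y"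
  have split: "(\<Sum>x\<in>B \<union> h ` Y. scale (c x) x)
      = (\<Sum>x\<in>B. scale (c x) x) + (\<Sum>y\<in>Y. scale (c (h y)) (h y))"
    using B(2) finite_index kernel_disjoint_h[OF ker]
    by (simp add: sum.union_disjoint sum.reindex[OF inj_on_h])
  have c_h: "c (h y) = 0" if "y \<in> Y" for y
  proof -
    have "0 = ev y (\<Sum>x\<in>B \<union> h ` Y. scale (c x) x)" using sum0 by (simp add: ev_zero)
    also have "\<dots> = ev y (\<Sum>x\<in>B. scale (c x) x) + c (h y)"
      using ev_sum_h[OF that, of "\<lambda>y. c (h y)"] by (simp add: split ev_add)
    also have "ev y (\<Sum>x\<in>B. scale (c x) x) = 0"
      using ker that by (simp add: ev_sum ev_scale)
    finally show ?thesis by simp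
  qed
  then have "(\<Sum>x\<in>B. scale (c x) x) = 0" using sum0 split by simp
  then show "c v = 0"
    using v c_h B unfolding independent_explicit_finite_subsets by blast
qed

lemma span_Un_h:
  assumes U: "subspace U" "h ` Y \<subseteq> U" and W: "{u \<in> U. \<forall>y\<in>Y. ev y u = 0} \<subseteq> span B"
  shows "U \<subseteq> span (B \<union> h ` Y)"
proof
  fix u assume u: "u \<in> U"
  define r where "r = (\<Sum>y\<in>Y. scale (ev y u) (h y))"
  have "r \<in> U" using U by (auto simp: r_def intro!: subspace_sum subspace_scale)
  moreover have "ev y (u - r) = 0" if "y \<in> Y" for y
    using that by (simp add: r_def ev_diff ev_sum_h)
  ultimately have "u - r \<in> span B" using W u U(1) subspace_diff by blast
  then have "u - r \<in> span (B \<union> h ` Y)" by (rule subsetD[OF span_mono, rotated]) blast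
  moreover have "r \<in> span (B \<union> h ` Y)"
    unfolding r_def by (intro span_sum span_scale span_base) auto
  ultimately have "(u - r) + r \<in> span (B \<union> h ` Y)" by (rule span_add)
  then show "u \<in> span (B \<union> h ` Y)" by simp
qed

theorem dim_eq_dim_kernel_add_card:
  assumes U: "subspace U" "finite M" "U \<subseteq> span M" "h ` Y \<subseteq> U"
  shows "dim U = dim {u \<in> U. \<forall>y\<in>Y. ev y u = 0} + card Y"
proof -
  let ?W = "{u \<in> U. \<forall>y\<in>Y. ev y u = 0}"
  obtain B where B: "B \<subseteq> ?W" "independent B" "?W \<subseteq> span B"
    using maximal_independent_subset[of ?W] by blast
  have "finite B" using independent_span_bound[OF U(2) B(2)] B(1) U(3) by blast
  have ker: "\<And>b y. b \<in> B \<Longrightarrow> y \<in> Y \<Longrightarrow> ev y b = 0" using B(1) by blast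
  have "dim U = card (B \<union> h ` Y)"
    using B U independent_Un_h[OF B(2) \<open>finite B\<close> ker] span_Un_h[OF U(1,4) B(3)]
    by (intro dim_unique) auto
  also have "\<dots> = card B + card Y"
    using \<open>finite B\<close> finite_index kernel_disjoint_h[OF ker]
    by (simp add: card_Un_disjoint card_image[OF inj_on_h])
  also have "card B = dim ?W" using B by (intro dim_unique[symmetric]) auto
  finally show ?thesis .
qed

end

section \<open>The Hilbert function of a finite set of points\<close>

interpretation mpoly_vs: vector_space "pscale :: 'a::field \<Rightarrow> ('n, 'a) mpoly \<Rightarrow> _"
  by unfold_locales
    (simp_all add: pscale_def distrib_left distrib_right single_add mult_single mult.assoc[symmetric])

lemma subspace_S_deg: "mpoly_vs.subspace (S_deg D :: ('n::finite, 'a::field) mpoly set)"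
  unfolding mpoly_vs.subspace_def by (auto intro: homogeneous_add homogeneous_pscale)

lemma S_deg_subset_span_monomials:
  "S_deg D \<subseteq> mpoly_vs.span
     ((\<lambda>m. Poly_Mapping.single m (1::'a::field)) ` {m :: 'n::finite \<Rightarrow>\<^sub>0 nat. mon_deg m = D})"
proof
  fix g :: "('n, 'a) mpoly" assume "g \<in> S_deg D"
  then have keys: "\<forall>m\<in>Poly_Mapping.keys g. mon_deg m = D" by (simp add: homogeneous_def)
  have "g = (\<Sum>m\<in>Poly_Mapping.keys g.
      pscale (Poly_Mapping.lookup g m) (Poly_Mapping.single m 1))"
    by (subst poly_mapping_sum_single) (simp add: pscale_def mult_single)
  also have "\<dots> \<in> mpoly_vs.span ((\<lambda>m. Poly_Mapping.single m 1) ` {m. mon_deg m = D})"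
    by (intro mpoly_vs.span_sum mpoly_vs.span_scale mpoly_vs.span_base) (use keys in auto)
  finally show "g \<in> mpoly_vs.span ((\<lambda>m. Poly_Mapping.single m 1) ` {m. mon_deg m = D})" .
qed

lemma dim_S_deg_eq:
  fixes X :: "('n::finite \<Rightarrow> 'a::field) set set"
  assumes X: "X \<subseteq> proj_space" "finite X" and D: "card X \<le> D + 1" and V: "V \<subseteq> X"
  shows "mpoly_vs.dim (S_deg D :: ('n, 'a) mpoly set)
    = mpoly_vs.dim {g \<in> S_deg D. \<forall>P\<in>V. peval g (rep P) = 0} + card V"
proof -
  have "\<forall>P\<in>X. \<exists>h. homogeneous D h \<and> peval h (rep P) = (1::'a)
      \<and> (\<forall>Q\<in>X - {P}. peval h (rep Q) = 0)"
    using delta_form_exists[OF X _ D] by blast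
  then obtain H where H: "\<And>P. P \<in> X \<Longrightarrow> homogeneous D (H P) \<and> peval (H P) (rep P) = 1
      \<and> (\<forall>Q\<in>X - {P}. peval (H P) (rep Q) = 0)"
    by metis
  interpret biorthogonal_family pscale V "\<lambda>P g. peval g (rep P)" H
  proof
    show "finite V" using V X(2) by (rule finite_subset)
  next
    fix P Q assume "P \<in> V" "Q \<in> V"
    then show "peval (H P) (rep Q) = (if Q = P then 1 else 0)" using H V by auto
  qed (simp_all add: peval_add peval_pscale)
  show ?thesis
  proof (rule dim_eq_dim_kernel_add_card)
    show "mpoly_vs.subspace (S_deg D :: ('n, 'a) mpoly set)" by (rule subspace_S_deg)
    show "S_deg D \<subseteq> mpoly_vs.span ((\<lambda>m. Poly_Mapping.single m 1) ` {m. mon_deg m = D})"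
      by (rule S_deg_subset_span_monomials)
    show "H ` V \<subseteq> S_deg D" using H V by auto
  qed (simp add: finite_mon_deg_eq)
qed

lemma hilbert_fun_eq_card:
  fixes X :: "('n::finite \<Rightarrow> 'a::field) set set" and J :: "('n, 'a) mpoly set"
  assumes X: "X \<subseteq> proj_space" "finite X" and D: "card X \<le> D + 1" and V: "V \<subseteq> X"
    and J: "J \<inter> S_deg D = {g \<in> S_deg D. \<forall>P\<in>V. peval g (rep P) = 0}"
  shows "hilbert_fun J D = card V"
  using dim_S_deg_eq[OF X D V] by (simp add: hilbert_fun_def kdim_def J)

section \<open>Krull dimension\<close>

lemma poly_ideal_min_degree_exists:
  fixes Q :: "'a::field poly set"
  assumes "\<exists>q\<in>Q. q \<noteq> 0"
  shows "\<exists>q\<in>Q. q \<noteq> 0 \<and> (\<forall>q'\<in>Q. q' \<noteq> 0 \<longrightarrow> degree q \<le> degree q')"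
proof -
  define n where "n = (LEAST n. \<exists>q\<in>Q. q \<noteq> 0 \<and> degree q = n)"
  have "\<exists>q\<in>Q. q \<noteq> 0 \<and> degree q = n"
    unfolding n_def by (rule LeastI_ex) (use assms in blast)
  moreover have "\<forall>q'\<in>Q. q' \<noteq> 0 \<longrightarrow> n \<le> degree q'"
    unfolding n_def by (auto intro: Least_le)
  ultimately show ?thesis by auto
qed

lemma poly_ideal_min_degree_dvd:
  fixes Q :: "'a::field poly set"
  assumes Q: "is_ideal Q" and q: "q \<in> Q" "q \<noteq> 0"
    and min: "\<forall>q'\<in>Q. q' \<noteq> 0 \<longrightarrow> degree q \<le> degree q'" and a: "a \<in> Q"
  shows "q dvd a"
proof (rule ccontr)
  assume "\<not> q dvd a"
  then have "a mod q \<noteq> 0" "degree (a mod q) < degree q"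
    using degree_mod_less_degree[OF q(2)] by (auto simp: mod_eq_0_iff_dvd)
  moreover have "a mod q \<in> Q"
    using Q a q by (simp add: minus_div_mult_eq_mod[symmetric] ideal_diff ideal_mult_left)
  ultimately show False using min by force
qed

text \<open>Write an element of least degree of \<open>Q\<close> as \<open>s k\<close> with \<open>s\<close> of least degree in \<open>Q'\<close>;
  primality puts \<open>s\<close> into \<open>Q\<close>, whence \<open>Q' \<subseteq> Q\<close>, or \<open>k\<close> into \<open>Q\<close>, whence \<open>s\<close> is a unit.\<close>

lemma poly_prime_ideal_maximal:
  fixes Q Q' :: "'a::field poly set"
  assumes Q: "prime_ideal Q" "\<exists>q\<in>Q. q \<noteq> 0" and Q': "is_ideal Q'" "1 \<notin> Q'"
    and "Q \<subseteq> Q'"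
  shows "Q' = Q"
proof (rule ccontr)
  assume "Q' \<noteq> Q"
  then obtain r where r: "r \<in> Q'" "r \<notin> Q" using \<open>Q \<subseteq> Q'\<close> by blast
  have "is_ideal Q" using Q(1) by (simp add: prime_ideal_def)
  obtain q where q: "q \<in> Q" "q \<noteq> 0" "\<forall>q'\<in>Q. q' \<noteq> 0 \<longrightarrow> degree q \<le> degree q'"
    using poly_ideal_min_degree_exists[OF Q(2)] by blast
  obtain s where s: "s \<in> Q'" "s \<noteq> 0" "\<forall>q'\<in>Q'. q' \<noteq> 0 \<longrightarrow> degree s \<le> degree q'"
    using poly_ideal_min_degree_exists[of Q'] q \<open>Q \<subseteq> Q'\<close> by blast
  have "s dvd q" using poly_ideal_min_degree_dvd[OF Q'(1) s] q \<open>Q \<subseteq> Q'\<close> by blast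
  then obtain k where k: "q = s * k" by (rule dvdE)
  then have "s \<in> Q \<or> k \<in> Q" using Q(1) q(1) by (simp add: prime_ideal_def)
  then show False
  proof
    assume "s \<in> Q"
    moreover obtain t where "r = s * t"
      using poly_ideal_min_degree_dvd[OF Q'(1) s r(1)] by (auto elim: dvdE)
    ultimately show False using r \<open>is_ideal Q\<close> by (simp add: ideal_mult_right)
  next
    assume "k \<in> Q"
    have "k \<noteq> 0" using k q(2) by auto
    then have "degree q \<le> degree k" "degree q = degree s + degree k"
      using q(3) \<open>k \<in> Q\<close> k s(2) by (auto simp: degree_mult_eq)
    then have "is_unit s" using s(2) by (simp add: is_unit_iff_degree)
    then obtain t where "1 = s * t" by (auto elim: dvdE)
    then show False using Q' s(1) by (metis ideal_mult_right)
  qed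
qed

lemma line_poly_mem_image_iff:
  assumes P: "is_ideal P" "point_ideal x \<subseteq> P"
  shows "line_poly x g \<in> line_poly x ` P \<longleftrightarrow> g \<in> P"
proof
  assume "line_poly x g \<in> line_poly x ` P"
  then obtain p where p: "p \<in> P" "line_poly x g = line_poly x p" by blast
  then have "g - p \<in> P" using P(2) by (auto simp: point_ideal_def line_poly_diff)
  then have "(g - p) + p \<in> P" using ideal_add[OF P(1) _ p(1)] by blast
  then show "g \<in> P" by simp
qed auto

lemma is_ideal_line_poly_image:
  assumes x: "x \<noteq> (\<lambda>_. 0)" and P: "is_ideal P"
  shows "is_ideal (line_poly x ` P)"
  unfolding is_ideal_def
proof (intro conjI ballI allI)
  show "0 \<in> line_poly x ` P" using ideal_0[OF P] by (metis image_eqI line_poly_zero)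
next
  fix a b assume "a \<in> line_poly x ` P" "b \<in> line_poly x ` P"
  then show "a + b \<in> line_poly x ` P" using ideal_add[OF P] by (auto simp flip: line_poly_add)
next
  fix a r assume "a \<in> line_poly x ` P"
  moreover obtain s where "line_poly x s = r" using line_poly_surj[OF x] by blast
  ultimately show "r * a \<in> line_poly x ` P"
    using ideal_mult_left[OF P] by (auto simp flip: line_poly_mult)
qed

lemma prime_ideal_line_poly_image:
  assumes x: "x \<noteq> (\<lambda>_. 0)" and P: "prime_ideal P" "point_ideal x \<subseteq> P"
  shows "prime_ideal (line_poly x ` P)"
proof -
  have I: "is_ideal P" using P(1) by (simp add: prime_ideal_def)
  have "1 \<notin> line_poly x ` P"
    using line_poly_mem_image_iff[OF I P(2), of 1] one_not_in_prime_ideal[OF P(1)] by simp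
  moreover have "u \<in> line_poly x ` P \<or> v \<in> line_poly x ` P"
    if "u * v \<in> line_poly x ` P" for u v
  proof -
    obtain a b where ab: "line_poly x a = u" "line_poly x b = v"
      using line_poly_surj[OF x] by metis
    then have "a * b \<in> P"
      using that line_poly_mem_image_iff[OF I P(2), of "a * b"] by (simp add: line_poly_mult)
    then show ?thesis using P(1) ab by (auto simp: prime_ideal_def)
  qed
  ultimately show ?thesis
    using is_ideal_line_poly_image[OF x I] by (auto simp: prime_ideal_def)
qed

lemma no_prime_chain_above_point_ideal:
  assumes x: "x \<noteq> (\<lambda>_. 0)" and primes: "prime_ideal P0" "prime_ideal P1" "prime_ideal P2"
    and chain: "P0 \<subset> P1" "P1 \<subset> P2" and "point_ideal x \<subseteq> P0"
  shows False
proof -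
  have sub: "point_ideal x \<subseteq> P1" "point_ideal x \<subseteq> P2" using assms by auto
  have I2: "is_ideal P2" using primes(3) by (simp add: prime_ideal_def)
  obtain g where "g \<in> P1" "g \<notin> P0" using chain(1) by blast
  then have "line_poly x g \<noteq> 0" using \<open>point_ideal x \<subseteq> P0\<close> by (auto simp: point_ideal_def)
  then have "line_poly x ` P2 = line_poly x ` P1"
    using prime_ideal_line_poly_image[OF x primes(2) sub(1)] \<open>g \<in> P1\<close>
      is_ideal_line_poly_image[OF x I2] line_poly_mem_image_iff[OF I2 sub(2), of 1]
      one_not_in_prime_ideal[OF primes(3)] chain(2)
    by (intro poly_prime_ideal_maximal) auto
  moreover obtain g2 where "g2 \<in> P2" "g2 \<notin> P1" using chain(2) by blast
  ultimately show False
    using line_poly_mem_image_iff[OF _ sub(1), of g2] primes(2) by (auto simp: prime_ideal_def)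
qed

lemma prime_ideal_contains_point_ideal:
  assumes X: "X \<subseteq> proj_space" "finite X" and P: "prime_ideal P" "vanishing_ideal X \<subseteq> P"
  shows "\<exists>Q\<in>X. point_ideal (rep Q) \<subseteq> P"
proof (rule ccontr)
  assume "\<not> ?thesis"
  then have "\<forall>Q\<in>X. \<exists>g. g \<in> point_ideal (rep Q) \<and> g \<notin> P" by blast
  then obtain G where G: "\<And>Q. Q \<in> X \<Longrightarrow> G Q \<in> point_ideal (rep Q) \<and> G Q \<notin> P" by metis
  text \<open>The product of the \<open>G Q\<close> lies in every point ideal, hence in \<open>I(X) \<subseteq> P\<close>.\<close>
  have "prod G X \<in> point_ideal (rep Q)" if "Q \<in> X" for Q
    using G[OF that] that X(2) by (auto simp: point_ideal_def line_poly_prod)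
  then have "prod G X \<in> P" using P(2) by (auto simp: vanishing_ideal_eq[OF X(1)])
  then show False using prime_ideal_prod[OF P(1) X(2)] G by blast
qed

text \<open>The preimage of \<open>(t)\<close> under \<open>line_poly x\<close> is the ideal \<open>(t\<^sub>1, \<dots>, t\<^sub>s)\<close> of forms without
  constant term.\<close>

lemma point_ideal_psubset_prime_ideal:
  assumes x: "x \<noteq> (\<lambda>_. 0)"
  shows "\<exists>P. prime_ideal P \<and> point_ideal x \<subset> P"
proof -
  define P where "P = {g. poly (line_poly x g) 0 = 0}"
  obtain i where xi: "x i \<noteq> 0" using x by auto
  have "line_poly x (var i) = monom (x i) 1"
    using line_poly_homogeneous[OF homogeneous_var] by simp
  then have "var i \<in> P" "var i \<notin> point_ideal x"
    using xi by (auto simp: P_def point_ideal_def poly_monom)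
  moreover have "point_ideal x \<subseteq> P" by (auto simp: P_def point_ideal_def)
  moreover have "prime_ideal P"
  proof -
    have "1 \<notin> P" by (simp add: P_def)
    then have "P \<noteq> UNIV" by blast
    then show ?thesis
      by (auto simp: P_def prime_ideal_def is_ideal_def line_poly_add line_poly_mult)
  qed
  ultimately show ?thesis by blast
qed

lemma krull_dim_eq_1:
  fixes X :: "('n::finite \<Rightarrow> 'a::field) set set" and J :: "('n, 'a) mpoly set"
  assumes X: "X \<subseteq> proj_space" "finite X" and "vanishing_ideal X \<subseteq> J"
    and Q: "Q \<in> X" "J \<subseteq> point_ideal (rep Q)"
  shows "krull_dim J = 1"
proof -
  define K where "K = {k. \<exists>P :: nat \<Rightarrow> ('n, 'a) mpoly set.
      (\<forall>i\<le>k. prime_ideal (P i) \<and> J \<subseteq> P i) \<and> (\<forall>i<k. P i \<subset> P (Suc i))}"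
  have x: "rep Q \<noteq> (\<lambda>_. 0)" using rep_nonzero Q X(1) by blast
  have "1 \<in> K"
  proof -
    obtain P1 where P1: "prime_ideal P1" "point_ideal (rep Q) \<subset> P1"
      using point_ideal_psubset_prime_ideal[OF x] by blast
    define P where "P i = (if i = 0 then point_ideal (rep Q) else P1)" for i :: nat
    have "(\<forall>i\<le>1. prime_ideal (P i) \<and> J \<subseteq> P i) \<and> (\<forall>i<1. P i \<subset> P (Suc i))"
      using P1 prime_ideal_point_ideal[OF x] Q(2) by (auto simp: P_def le_Suc_eq)
    then show ?thesis unfolding K_def by blast
  qed
  moreover have "k \<le> 1" if "k \<in> K" for k
  proof (rule ccontr)
    assume "\<not> k \<le> 1"
    obtain P where P: "\<forall>i\<le>k. prime_ideal (P i) \<and> J \<subseteq> P i" "\<forall>i<k. P i \<subset> P (Suc i)"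
      using \<open>k \<in> K\<close> unfolding K_def by blast
    have primes: "prime_ideal (P i)" "vanishing_ideal X \<subseteq> P i" if "i \<le> 2" for i
    proof -
      have "i \<le> k" using that \<open>\<not> k \<le> 1\<close> by linarith
      then show "prime_ideal (P i)" "vanishing_ideal X \<subseteq> P i" using P(1) assms(3) by auto
    qed
    have chain: "P 0 \<subset> P 1" "P 1 \<subset> P 2" using P(2) \<open>\<not> k \<le> 1\<close> by (auto simp: numeral_2_eq_2)
    obtain Q' where "Q' \<in> X" "point_ideal (rep Q') \<subseteq> P 0"
      using prime_ideal_contains_point_ideal[OF X primes[of 0]] by auto
    then show False
      using no_prime_chain_above_point_ideal[OF rep_nonzero primes(1)[of 0] primes(1)[of 1]
          primes(1)[of 2] chain] X(1) by auto
  qed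
  ultimately have "Sup K = 1" by (intro cSup_eq_maximum) auto
  then show ?thesis by (simp add: krull_dim_def K_def)
qed

section \<open>Degrees of the quotient rings\<close>

lemma deg_quot_eq_card:
  fixes X :: "('n::finite \<Rightarrow> 'a::field) set set" and J :: "('n, 'a) mpoly set"
  assumes X: "X \<subseteq> proj_space" "finite X" and V: "V \<subseteq> X" "Q \<in> V"
    and J: "vanishing_ideal X \<subseteq> J" "J \<subseteq> point_ideal (rep Q)"
    and J_S_deg: "\<And>D. D \<ge> D0 \<Longrightarrow> J \<inter> S_deg D = {g \<in> S_deg D. \<forall>P\<in>V. peval g (rep P) = 0}"
  shows "deg_quot J = card V"
proof -
  have "krull_dim J = 1" using krull_dim_eq_1[OF X J(1) _ J(2)] V by blast
  moreover have "eventually (\<lambda>D. real (hilbert_fun J D) / real D ^ (1 - 1) = real (card V))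
      sequentially"
    unfolding eventually_sequentially using hilbert_fun_eq_card[OF X _ V(1) J_S_deg]
    by (intro exI[of _ "max D0 (card X)"]) auto
  then have "lim (\<lambda>D. real (hilbert_fun J D) / real D ^ (1 - 1)) = real (card V)"
    by (intro limI tendsto_eventually)
  ultimately show ?thesis by (simp add: deg_quot_def)
qed

lemma deg_quot_vanishing_ideal:
  assumes X: "X \<subseteq> proj_space" "finite X" "X \<noteq> {}"
  shows "deg_quot (vanishing_ideal X) = card X"
proof -
  obtain Q where "Q \<in> X" using X(3) by blast
  then show ?thesis
    using vanishing_ideal_eq[OF X(1)] vanishing_ideal_Int_S_deg[OF X(1)]
    by (intro deg_quot_eq_card[OF X(1,2) subset_refl]) auto
qed

lemma ideal_insert_subset_point_ideal:
  assumes X: "X \<subseteq> proj_space" and f: "homogeneous d f" and Q: "Q \<in> X" "peval f (rep Q) = 0"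
  shows "ideal_gen (insert f (vanishing_ideal X)) \<subseteq> point_ideal (rep Q)"
proof (rule ideal_gen_least)
  show "is_ideal (point_ideal (rep Q))"
    by (auto simp: is_ideal_def point_ideal_def line_poly_add line_poly_mult)
  show "insert f (vanishing_ideal X) \<subseteq> point_ideal (rep Q)"
    using Q f vanishing_ideal_eq[OF X] homogeneous_in_point_ideal_iff by blast
qed

text \<open>In degree \<open>D \<ge> d + |X|\<close> a form \<open>g\<close> vanishing on \<open>V\<^sub>X(f)\<close> is \<open>f h\<close> modulo \<open>I(X)\<close>, where
  \<open>h\<close> interpolates \<open>g/f\<close> on \<open>X\<close>.\<close>

lemma ideal_insert_Int_S_deg:
  fixes X :: "('n::finite \<Rightarrow> 'a::field) set set"
  assumes X: "X \<subseteq> proj_space" "finite X" and f: "homogeneous d f" and D: "d + card X \<le> D"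
  shows "ideal_gen (insert f (vanishing_ideal X)) \<inter> S_deg D
    = {g \<in> S_deg D. \<forall>P\<in>V_X X f. peval g (rep P) = 0}"
    (is "?J \<inter> _ = _")
proof (intro equalityI subsetI)
  fix g assume g: "g \<in> ?J \<inter> S_deg D"
  have "peval g (rep P) = 0" if "P \<in> X" "peval f (rep P) = 0" for P
    using ideal_insert_subset_point_ideal[OF X(1) f that] g
      homogeneous_in_point_ideal_iff[of D g] by auto
  then show "g \<in> {g \<in> S_deg D. \<forall>P\<in>V_X X f. peval g (rep P) = 0}"
    using g by (auto simp: V_X_eq[OF X(1) f])
next
  fix g assume "g \<in> {g \<in> S_deg D. \<forall>P\<in>V_X X f. peval g (rep P) = 0}"
  then have g: "homogeneous D g" "\<And>P. P \<in> X \<Longrightarrow> peval f (rep P) = 0 \<Longrightarrow> peval g (rep P) = 0"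
    by (auto simp: V_X_eq[OF X(1) f])
  have "card X \<le> D - d + 1" using D by simp
  obtain h where h: "homogeneous (D - d) h"
    "\<forall>P\<in>X. peval h (rep P) = peval g (rep P) / peval f (rep P)"
    using interpolating_form_exists[OF X \<open>card X \<le> D - d + 1\<close>, of "\<lambda>P. peval g (rep P) / peval f (rep P)"]
    by blast
  have "homogeneous D (g - f * h)"
    using homogeneous_mult[OF f h(1)] g(1) D by (auto intro: homogeneous_diff)
  moreover have "peval (g - f * h) (rep P) = 0" if "P \<in> X" for P
  proof (cases "peval f (rep P) = 0")
    case True
    then show ?thesis using g(2)[OF that True] by (simp add: peval_diff peval_mult)
  next
    case False
    then show ?thesis using h(2) that by (simp add: peval_diff peval_mult)
  qed
  ultimately have "g - f * h \<in> vanishing_ideal X"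
    using homogeneous_in_vanishing_ideal_iff[OF X(1)] by blast
  then have "g - f * h \<in> ?J" using ideal_gen_subset by blast
  moreover have "f * h \<in> ?J"
    by (rule ideal_mult_right[OF is_ideal_ideal_gen]) (rule subsetD[OF ideal_gen_subset], simp)
  ultimately have "(g - f * h) + f * h \<in> ?J" by (rule ideal_add[OF is_ideal_ideal_gen])
  then show "g \<in> ?J \<inter> S_deg D" using g(1) by simp
qed

lemma deg_quot_ideal_insert:
  assumes X: "X \<subseteq> proj_space" "finite X" and f: "homogeneous d f" and "V_X X f \<noteq> {}"
  shows "deg_quot (ideal_gen (insert f (vanishing_ideal X))) = card (V_X X f)"
proof -
  obtain Q where Q: "Q \<in> X" "peval f (rep Q) = 0"
    using \<open>V_X X f \<noteq> {}\<close> by (auto simp: V_X_eq[OF X(1) f])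
  show ?thesis
  proof (rule deg_quot_eq_card[OF X _ _ _ ideal_insert_subset_point_ideal[OF X(1) f Q]])
    show "vanishing_ideal X \<subseteq> ideal_gen (insert f (vanishing_ideal X))"
      using ideal_gen_subset by blast
    show "D \<ge> d + card X \<Longrightarrow> ideal_gen (insert f (vanishing_ideal X)) \<inter> S_deg D
        = {g \<in> S_deg D. \<forall>P\<in>V_X X f. peval g (rep P) = 0}" for D
      using ideal_insert_Int_S_deg[OF X f] by blast
  qed (use Q in \<open>auto simp: V_X_eq[OF X(1) f]\<close>)
qed

section \<open>Zero divisors modulo the vanishing ideal\<close>

lemma colon_vanishing_ideal_eq:
  assumes X: "X \<subseteq> proj_space" and f: "homogeneous d f" and "V_X X f = {}"
  shows "colon (vanishing_ideal X) f = vanishing_ideal X"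
proof
  show "vanishing_ideal X \<subseteq> colon (vanishing_ideal X) f"
    by (auto simp: colon_def intro: ideal_mult_right[OF is_ideal_vanishing_ideal])
next
  show "colon (vanishing_ideal X) f \<subseteq> vanishing_ideal X"
  proof
    fix g assume "g \<in> colon (vanishing_ideal X) f"
    then have "line_poly (rep Q) g * line_poly (rep Q) f = 0" if "Q \<in> X" for Q
      using that by (auto simp: colon_def vanishing_ideal_eq[OF X] point_ideal_def line_poly_mult)
    moreover have "line_poly (rep Q) f \<noteq> 0" if "Q \<in> X" for Q
      using \<open>V_X X f = {}\<close> that by (auto simp: V_X_eq[OF X f] line_poly_homogeneous[OF f])
    ultimately show "g \<in> vanishing_ideal X"
      by (auto simp: vanishing_ideal_eq[OF X] point_ideal_def)
  qed
qed

lemma colon_vanishing_ideal_neq: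
  assumes X: "X \<subseteq> proj_space" "finite X" and f: "homogeneous d f" and P: "P \<in> V_X X f"
  shows "colon (vanishing_ideal X) f \<noteq> vanishing_ideal X"
proof -
  let ?I = "vanishing_ideal X" and ?W = "X - V_X X f"
  have "P \<in> X" "P \<in> proj_space" "peval f (rep P) = 0" using P X(1) by (auto simp: V_X_eq[OF X(1) f])
  then have "\<forall>Q\<in>?W. \<exists>l. homogeneous 1 l \<and> peval l (rep Q) = 0 \<and> peval l (rep P) \<noteq> 0"
    using separating_linear_form X(1) by (force simp: V_X_eq[OF X(1) f])
  then obtain L where L: "\<And>Q. Q \<in> ?W \<Longrightarrow>
      homogeneous 1 (L Q) \<and> peval (L Q) (rep Q) = 0 \<and> peval (L Q) (rep P) \<noteq> 0"
    by metis
  text \<open>\<open>\<Prod> L\<close> vanishes exactly where \<open>f\<close> does not, among the points of \<open>X\<close>.\<close>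
  have g: "homogeneous (card ?W) (prod L ?W)"
    using homogeneous_prod[of ?W "\<lambda>_. 1" L] L by simp
  have "finite ?W" using X(2) by simp
  then have "peval (prod L ?W) (rep P) \<noteq> 0" using L by (simp add: peval_prod)
  then have "prod L ?W \<notin> ?I" using homogeneous_in_vanishing_ideal_iff[OF X(1) g] \<open>P \<in> X\<close> by blast
  moreover have "peval (prod L ?W * f) (rep Q) = 0" if "Q \<in> X" for Q
  proof (cases "Q \<in> ?W")
    case True
    then show ?thesis using L[OF True] \<open>finite ?W\<close> by (auto simp: peval_mult peval_prod)
  next
    case False
    then show ?thesis using that by (simp add: V_X_eq[OF X(1) f] peval_mult)
  qed
  then have "prod L ?W * f \<in> ?I"
    using homogeneous_in_vanishing_ideal_iff[OF X(1) homogeneous_mult[OF g f]] by blast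
  ultimately show ?thesis by (auto simp: colon_def)
qed

lemma F_set_vanishing_ideal:
  assumes "X \<subseteq> proj_space" "finite X"
  shows "F_set (vanishing_ideal X) d = {f \<in> S_deg d. f \<notin> vanishing_ideal X \<and> V_X X f \<noteq> {}}"
  using colon_vanishing_ideal_eq[OF assms(1)] colon_vanishing_ideal_neq[OF assms]
  by (auto simp: F_set_def)

section \<open>The minimum distance\<close>

lemma Min_diff_eq_diff_Max:
  fixes c :: "'a \<Rightarrow> nat"
  assumes "finite (c ` A)" "A \<noteq> {}"
  shows "Min ((\<lambda>x. n - c x) ` A) = n - Max (c ` A)"
proof -
  have "(\<lambda>x. n - c x) ` A = (\<lambda>k. n - k) ` c ` A" by (simp add: image_image)
  moreover have "Max (c ` A) \<in> c ` A" using assms by (intro Max_in) auto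
  ultimately show ?thesis using assms by (intro Min_eqI) (auto intro: diff_le_mono2)
qed

context
  fixes X :: "('n::finite \<Rightarrow> 'a::field) set set" and d :: nat
  assumes X: "X \<subseteq> proj_space" "finite X" "X \<noteq> {}"
begin

definition nonvanishing_forms :: "('n, 'a) mpoly set" where
  "nonvanishing_forms = {f \<in> S_deg d. f \<notin> vanishing_ideal X}"

definition max_zeros :: nat where
  "max_zeros = Max ((\<lambda>f. card (V_X X f)) ` nonvanishing_forms)"

lemma card_V_X_less:
  assumes "f \<in> nonvanishing_forms"
  shows "card (V_X X f) < card X"
proof (rule psubset_card_mono[OF X(2)])
  show "V_X X f \<subset> X"
    using assms homogeneous_in_vanishing_ideal_iff[OF X(1), of d f]
    by (auto simp: nonvanishing_forms_def V_X_eq[OF X(1)])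
qed

lemma nonvanishing_forms_nonempty: "nonvanishing_forms \<noteq> {}"
proof -
  obtain P where P: "P \<in> X" using X(3) by blast
  then obtain i where i: "rep P i \<noteq> 0" using rep_nonzero X(1) by blast
  have "homogeneous d (var i ^ d :: ('n, 'a) mpoly)"
    using homogeneous_power[OF homogeneous_var, of d i] by simp
  moreover have "peval (var i ^ d :: ('n, 'a) mpoly) (rep P) \<noteq> 0" using i by (simp add: peval_power)
  ultimately show ?thesis
    using homogeneous_in_vanishing_ideal_iff[OF X(1)] P by (auto simp: nonvanishing_forms_def)
qed

lemma finite_card_V_X_image: "finite ((\<lambda>f. card (V_X X f)) ` nonvanishing_forms)"
  by (rule finite_subset[of _ "{..card X}"]) (auto dest: card_V_X_less)

lemma max_zeros_less: "max_zeros < card X"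
  unfolding max_zeros_def
  using finite_card_V_X_image nonvanishing_forms_nonempty card_V_X_less by auto

lemma delta_X_eq: "delta_X X d = card X - max_zeros"
proof -
  have "{card X - card (V_X X f) |f :: ('n, 'a) mpoly. f \<in> S_deg d \<and> f \<notin> vanishing_ideal X}
      = (\<lambda>f. card X - card (V_X X f)) ` nonvanishing_forms"
    by (auto simp: nonvanishing_forms_def)
  then show ?thesis
    unfolding delta_X_def max_zeros_def
    using Min_diff_eq_diff_Max[OF finite_card_V_X_image nonvanishing_forms_nonempty] by simp
qed

lemma F_set_eq: "F_set (vanishing_ideal X) d = {f \<in> nonvanishing_forms. card (V_X X f) \<noteq> 0}"
  using F_set_vanishing_ideal[OF X(1,2)] X(2) by (auto simp: nonvanishing_forms_def V_X_def)

text \<open>Nonvanishing forms outside \<open>F_set\<close> have no zeros on \<open>X\<close>, so the maximum over \<open>F_set\<close>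
  is \<open>max_zeros\<close>.\<close>

lemma Max_card_V_X_F_set:
  assumes "F_set (vanishing_ideal X) d \<noteq> {}"
  shows "Max ((\<lambda>f. card (V_X X f)) ` F_set (vanishing_ideal X) d) = max_zeros"
    (is "Max (?c ` ?F) = _")
proof (rule antisym)
  show "Max (?c ` ?F) \<le> max_zeros"
    unfolding max_zeros_def using assms F_set_eq finite_card_V_X_image by (intro Max_mono) auto
  have "max_zeros \<in> ?c ` nonvanishing_forms"
    unfolding max_zeros_def using finite_card_V_X_image nonvanishing_forms_nonempty by simp
  then obtain f where f: "f \<in> nonvanishing_forms" "max_zeros = ?c f" by blast
  show "max_zeros \<le> Max (?c ` ?F)"
  proof (cases "?c f = 0")
    case False
    then have "f \<in> ?F" using F_set_eq f(1) by simp
    moreover have "finite (?c ` ?F)"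
      by (rule finite_subset[OF _ finite_card_V_X_image]) (auto simp: F_set_eq)
    ultimately show ?thesis using f(2) by (intro Max_ge) auto
  qed (use f in simp)
qed

lemma delta_I_eq: "delta_I (vanishing_ideal X) d = real (card X) - real max_zeros"
proof (cases "F_set (vanishing_ideal X) d = {}")
  case True
  then have "(\<lambda>f. card (V_X X f)) ` nonvanishing_forms = {0}"
    using F_set_eq nonvanishing_forms_nonempty by auto
  then show ?thesis
    using True deg_quot_vanishing_ideal[OF X] by (simp add: delta_I_def max_zeros_def)
next
  case False
  let ?c = "\<lambda>f. card (V_X X f)" and ?F = "F_set (vanishing_ideal X) d"
  have "deg_quot (ideal_gen (insert f (vanishing_ideal X))) = real (?c f)" if "f \<in> ?F" for f
    using that F_set_eq deg_quot_ideal_insert[OF X(1,2), of d f]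
    by (auto simp: nonvanishing_forms_def card_gt_0_iff)
  then have "(\<lambda>f. deg_quot (ideal_gen (insert f (vanishing_ideal X)))) ` ?F = real ` ?c ` ?F"
    by (simp add: image_image cong: image_cong)
  moreover have "finite (?c ` ?F)"
    by (rule finite_subset[OF _ finite_card_V_X_image]) (auto simp: F_set_eq)
  then have "Max (real ` ?c ` ?F) = real (Max (?c ` ?F))"
    using False by (intro mono_Max_commute[symmetric]) (auto simp: mono_def)
  ultimately show ?thesis
    using False deg_quot_vanishing_ideal[OF X] Max_card_V_X_F_set by (simp add: delta_I_def)
qed

end

theorem theorem4p7:
  fixes X :: "('n::finite \<Rightarrow> 'a::field) set set"
  assumes "X \<subseteq> proj_space" and "finite X" and "card X \<ge> 2"
    and "d \<ge> 1"
  shows "real (delta_X X d) = delta_I (vanishing_ideal X :: ('n, 'a) mpoly set) d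
    \<and> delta_I (vanishing_ideal X :: ('n, 'a) mpoly set) d \<ge> 1"
proof -
  have X: "X \<subseteq> proj_space" "finite X" "X \<noteq> {}" using assms by auto
  have "max_zeros X d < card X" by (rule max_zeros_less[OF X])
  then show ?thesis
    by (simp add: delta_X_eq[OF X] delta_I_eq[OF X] of_nat_diff)
qed

end
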